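(* Let $\Lambda$ be a finite set. Let $\mathcal{A}$ be a point based function array over a semigroup $A$ indexed by $\Lambda$, and let $\mathcal{S}$ be a function array over a partial semigroup $S$ indexed by $\Lambda$. Let $(f,g)\colon\mathcal{A}\to\gamma\mathcal{S}$ be a homomorphism. Then for each finite set $F\subseteq A$, each $D\in f(\bullet)$ and each coloring of $S$ with finitely many colors, there exists a basic sequence $(x_n)$ in $\mathcal{S}$ of elements of $D$ on which the coloring is $F$-$\mathcal{A}$-tame.
   Context: Partial semigroup: partial operation with $(rs)t$ defined iff $r(st)$ defined, then equal. A function array over $S$ indexed by non-empty $\Lambda$, based on a set $X$, assigns to each $\lambda$ a partial function $\lambda$ from $X$ to $S$ such that for all $s_0,\dots,s_k\in S$ some $x\in X$ has all $s_i\lambda(x)$ defined ($\lambda\in\Lambda$). Total: $S$ a semigroup, all $\lambda$ everywhere defined. Point based: $X=\{\bullet\}$. For $\mathcal{S}$ based on $X$: $\gamma S$ = ultrafilters $\mathcal{U}$ on $S$ with $\{t:st\text{ defined}\}\in\mathcal{U}$ for all $s$, a semigroup with $B\in\mathcal{U}*\mathcal{V}$ iff $\{s:\{t: st\text{ defined},\ st\in B\}\in\mathcal{V}\}\in\mathcal{U}$; $\gamma X$ = ultrafilters $\mathcal{U}$ on $X$ with $\{x: s\lambda(x)\text{ defined}\}\in\mathcal{U}$ for all $s,\lambda$; $B\in\lambda(\mathcal{U})$ iff $\lambda^{-1}(B)\in\mathcal{U}$; $\gamma\mathcal{S}$ = total function array over $\gamma S$ indexed by $\Lambda$ based on $\gamma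 X$. A homomorphism $(f,g)$ between total function arrays indexed by $\Lambda$ (over $A$ based on $X$, resp. over $B$ based on $Y$): $f\colon X\to Y$, $g\colon A\to B$ semigroup homomorphism, $\lambda(f(x))=g(\lambda(x))$. A sequence $(x_n)$ in $X$ is basic if $\lambda_0(x_{n_0})\cdots\lambda_l(x_{n_l})$ is defined for all $n_0<\cdots<n_l$, $\lambda_i\in\Lambda$. With $\vee$ the operation of $A$, a coloring of $S$ is $F$-$\mathcal{A}$-tame on $(x_n)$ if among products $\lambda_0(x_{n_0})\cdots\lambda_l(x_{n_l})$ ($n_0<\dots<n_l$) with $\lambda_k(\bullet)\vee\cdots\vee\lambda_l(\bullet)\in F$ for each $k\le l$, the color depends only on $\lambda_0(\bullet)\vee\cdots\vee\lambda_l(\bullet)$. *)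

theory Defs
  imports Main
begin

definition ultrafilter_on :: "'a set set \<Rightarrow> bool" where
  "ultrafilter_on U \<longleftrightarrow>
     UNIV \<in> U \<and> {} \<notin> U \<and>
     (\<forall>A B. A \<in> U \<and> A \<subseteq> B \<longrightarrow> B \<in> U) \<and>
     (\<forall>A B. A \<in> U \<and> B \<in> U \<longrightarrow> A \<inter> B \<in> U) \<and>
     (\<forall>A. A \<in> U \<or> - A \<in> U)"

text \<open>A partial operation is modelled as \<open>m :: 's \<Rightarrow> 's \<Rightarrow> 's option\<close>,
  \<open>m s t = None\<close> meaning that \<open>st\<close> is undefined. The carrier is the whole type.\<close>

definition partial_semigroup :: "('s \<Rightarrow> 's \<Rightarrow> 's option) \<Rightarrow> bool" where
  "partial_semigroup m \<longleftrightarrow>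
     (\<forall>r s t. Option.bind (m r s) (\<lambda>u. m u t) = Option.bind (m s t) (\<lambda>v. m r v))"

text \<open>Function array over \<open>S\<close> (with operation \<open>m\<close>) indexed by \<open>\<Lambda>\<close>, based on the
  set \<open>X\<close> (the whole type \<open>'x\<close>); \<open>lam l\<close> is the partial function belonging to \<open>l\<close>.\<close>

definition function_array ::
  "('s \<Rightarrow> 's \<Rightarrow> 's option) \<Rightarrow> 'i set \<Rightarrow> ('i \<Rightarrow> 'x \<Rightarrow> 's option) \<Rightarrow> bool" where
  "function_array m \<Lambda> lam \<longleftrightarrow> \<Lambda> \<noteq> {} \<and>
     (\<forall>T. finite T \<and> T \<noteq> {} \<longrightarrow>
        (\<exists>x. \<forall>s\<in>T. \<forall>l\<in>\<Lambda>. \<exists>y. lam l x = Some y \<and> m s y \<noteq> None))"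

definition gammaS :: "('s \<Rightarrow> 's \<Rightarrow> 's option) \<Rightarrow> 's set set set" where
  "gammaS m = {U. ultrafilter_on U \<and> (\<forall>s. {t. m s t \<noteq> None} \<in> U)}"

definition gamma_mult ::
  "('s \<Rightarrow> 's \<Rightarrow> 's option) \<Rightarrow> 's set set \<Rightarrow> 's set set \<Rightarrow> 's set set" where
  "gamma_mult m U V = {B. {s. {t. \<exists>u. m s t = Some u \<and> u \<in> B} \<in> V} \<in> U}"

definition gammaX ::
  "('s \<Rightarrow> 's \<Rightarrow> 's option) \<Rightarrow> 'i set \<Rightarrow> ('i \<Rightarrow> 'x \<Rightarrow> 's option) \<Rightarrow> 'x set set set" where
  "gammaX m \<Lambda> lam = {U. ultrafilter_on U \<and>
      (\<forall>s. \<forall>l\<in>\<Lambda>. {x. \<exists>y. lam l x = Some y \<and> m s y \<noteq> None} \<in> U)}"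

definition gamma_lam :: "('x \<Rightarrow> 's option) \<Rightarrow> 'x set set \<Rightarrow> 's set set" where
  "gamma_lam f U = {B. {x. \<exists>y. f x = Some y \<and> y \<in> B} \<in> U}"

fun pprod :: "('s \<Rightarrow> 's \<Rightarrow> 's option) \<Rightarrow> 's list \<Rightarrow> 's option" where
  "pprod m [] = None"
| "pprod m [s] = Some s"
| "pprod m (s # t # ts) = Option.bind (pprod m (t # ts)) (\<lambda>v. m s v)"

fun tprod :: "('a \<Rightarrow> 'a \<Rightarrow> 'a) \<Rightarrow> 'a list \<Rightarrow> 'a" where
  "tprod j [] = undefined"
| "tprod j [a] = a"
| "tprod j (a # b # bs) = j a (tprod j (b # bs))"

definition index_list :: "'i set \<Rightarrow> (nat \<times> 'i) list \<Rightarrow> bool" where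
  "index_list \<Lambda> ps \<longleftrightarrow> ps \<noteq> [] \<and> sorted_wrt (\<lambda>a b. fst a < fst b) ps \<and> snd ` set ps \<subseteq> \<Lambda>"

definition seq_prod ::
  "('s \<Rightarrow> 's \<Rightarrow> 's option) \<Rightarrow> ('i \<Rightarrow> 'x \<Rightarrow> 's option) \<Rightarrow> (nat \<Rightarrow> 'x) \<Rightarrow> (nat \<times> 'i) list \<Rightarrow> 's option" where
  "seq_prod m lam x ps =
     (if (\<forall>(n, l) \<in> set ps. lam l (x n) \<noteq> None)
      then pprod m (map (\<lambda>(n, l). the (lam l (x n))) ps) else None)"

definition basic_seq ::
  "('s \<Rightarrow> 's \<Rightarrow> 's option) \<Rightarrow> 'i set \<Rightarrow> ('i \<Rightarrow> 'x \<Rightarrow> 's option) \<Rightarrow> (nat \<Rightarrow> 'x) \<Rightarrow> bool" where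
  "basic_seq m \<Lambda> lam x \<longleftrightarrow> (\<forall>ps. index_list \<Lambda> ps \<longrightarrow> seq_prod m lam x ps \<noteq> None)"

definition label_prod :: "('a \<Rightarrow> 'a \<Rightarrow> 'a) \<Rightarrow> ('i \<Rightarrow> 'a) \<Rightarrow> (nat \<times> 'i) list \<Rightarrow> 'a" where
  "label_prod j lamA ps = tprod j (map (\<lambda>p. lamA (snd p)) ps)"

definition F_admissible ::
  "('a \<Rightarrow> 'a \<Rightarrow> 'a) \<Rightarrow> ('i \<Rightarrow> 'a) \<Rightarrow> 'a set \<Rightarrow> 'i set \<Rightarrow> (nat \<times> 'i) list \<Rightarrow> bool" where
  "F_admissible j lamA F \<Lambda> ps \<longleftrightarrow> index_list \<Lambda> ps \<and>
     (\<forall>k < length ps. label_prod j lamA (drop k ps) \<in> F)"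

definition tame ::
  "('s \<Rightarrow> 's \<Rightarrow> 's option) \<Rightarrow> 'i set \<Rightarrow> ('i \<Rightarrow> 'x \<Rightarrow> 's option) \<Rightarrow>
   ('a \<Rightarrow> 'a \<Rightarrow> 'a) \<Rightarrow> ('i \<Rightarrow> 'a) \<Rightarrow> 'a set \<Rightarrow> ('s \<Rightarrow> 'c) \<Rightarrow> (nat \<Rightarrow> 'x) \<Rightarrow> bool" where
  "tame m \<Lambda> lam j lamA F c x \<longleftrightarrow>
     (\<forall>ps qs u v. F_admissible j lamA F \<Lambda> ps \<and> F_admissible j lamA F \<Lambda> qs \<and>
        label_prod j lamA ps = label_prod j lamA qs \<and>
        seq_prod m lam x ps = Some u \<and> seq_prod m lam x qs = Some v \<longrightarrow> c u = c v)"

end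

theory Submission
  imports Defs
begin

text \<open>Choose in every ultrafilter \<open>g(a)\<close> a colour class \<open>C(a)\<close>. The terms \<open>x\<^sub>0, x\<^sub>1, \<dots>\<close> are
  chosen one at a time, maintaining for every index list \<open>ps\<close> over the terms chosen so far, with
  product \<open>u\<close> and label \<open>a\<close>: \<open>u \<in> C(a)\<close> if \<open>ps\<close> is \<open>F\<close>-admissible, and for every label \<open>b\<close>
  of a tail that may still follow \<open>ps\<close> admissibly, \<open>{t. ut \<in> C(a \<or> b)} \<in> g(b)\<close>.
  Because \<open>g(a \<or> b) = g(a) * g(b)\<close> and \<open>\<lambda>(p) = g(\<lambda>(\<bullet>))\<close>, each of the finitely many new
  constraints on \<open>x\<^sub>n\<close> describes a set in \<open>p\<close>, so \<open>x\<^sub>n\<close> can be taken in their intersection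
  with \<open>D\<close>.\<close>

lemma ultrafilter_on_mono: "ultrafilter_on U \<Longrightarrow> A \<in> U \<Longrightarrow> A \<subseteq> B \<Longrightarrow> B \<in> U"
  unfolding ultrafilter_on_def by blast

lemma ultrafilter_on_Int: "ultrafilter_on U \<Longrightarrow> A \<in> U \<Longrightarrow> B \<in> U \<Longrightarrow> A \<inter> B \<in> U"
  unfolding ultrafilter_on_def by blast

lemma ultrafilter_on_nonempty: "ultrafilter_on U \<Longrightarrow> A \<in> U \<Longrightarrow> A \<noteq> {}"
  unfolding ultrafilter_on_def by blast

lemma ultrafilter_on_INT:
  assumes "ultrafilter_on U" "finite I" "\<And>i. i \<in> I \<Longrightarrow> A i \<in> U"
  shows "(\<Inter>i\<in>I. A i) \<in> U"
  using assms(2,3)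
proof (induction I rule: finite_induct)
  case empty
  then show ?case using assms(1) unfolding ultrafilter_on_def by simp
next
  case (insert i I)
  then show ?case using ultrafilter_on_Int[OF assms(1)] by simp
qed

lemma ultrafilter_on_fiber:
  assumes U: "ultrafilter_on U" and fin: "finite (range c)"
  shows "\<exists>k. c -` {k} \<in> U"
proof (rule ccontr)
  assume "\<nexists>k. c -` {k} \<in> U"
  then have "\<forall>k\<in>range c. - (c -` {k}) \<in> U" using U unfolding ultrafilter_on_def by metis
  then have "(\<Inter>k\<in>range c. - (c -` {k})) \<in> U" by (intro ultrafilter_on_INT[OF U fin]) auto
  moreover have "(\<Inter>k\<in>range c. - (c -` {k})) = {}" by auto
  ultimately show False using ultrafilter_on_nonempty[OF U] by blast
qed

lemma partial_semigroup_assoc: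
  "partial_semigroup m \<Longrightarrow> m r s = Some u \<Longrightarrow> m s t = Some v \<Longrightarrow> m u t = m r v"
  unfolding partial_semigroup_def by (metis bind.simps(2))

lemma pprod_snoc:
  assumes "partial_semigroup m"
  shows "xs \<noteq> [] \<Longrightarrow> pprod m (xs @ [y]) = Option.bind (pprod m xs) (\<lambda>u. m u y)"
proof (induction xs)
  case (Cons s xs)
  show ?case
  proof (cases "xs = []")
    case False
    then obtain t ts where xs: "xs = t # ts" by (cases xs) auto
    show ?thesis
    proof (cases "pprod m xs")
      case (Some v)
      have "Option.bind (m v y) (m s) = Option.bind (m s v) (\<lambda>u. m u y)"
        using assms unfolding partial_semigroup_def by metis
      then show ?thesis using Cons.IH False xs Some by simp
    qed (use Cons.IH False xs in simp)
  qed simp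
qed simp

lemma tprod_snoc:
  assumes "\<And>a b d. j (j a b) d = j a (j b d)"
  shows "xs \<noteq> [] \<Longrightarrow> tprod j (xs @ [y]) = j (tprod j xs) y"
proof (induction xs)
  case (Cons a xs)
  then show ?case using assms by (cases xs) auto
qed simp

lemma label_prod_single: "label_prod j lamA [(n, l)] = lamA l"
  unfolding label_prod_def by simp

lemma label_prod_snoc:
  assumes "\<And>a b d. j (j a b) d = j a (j b d)" "ps \<noteq> []"
  shows "label_prod j lamA (ps @ [(n, l)]) = j (label_prod j lamA ps) (lamA l)"
  unfolding label_prod_def using tprod_snoc[OF assms(1)] assms(2) by simp

lemma seq_prod_single: "lam l (x n) = Some s \<Longrightarrow> seq_prod m lam x [(n, l)] = Some s"
  unfolding seq_prod_def by simp

lemma seq_prod_snoc: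
  assumes "partial_semigroup m" "ps \<noteq> []" "lam l (x n) = Some s"
  shows "seq_prod m lam x (ps @ [(n, l)]) = Option.bind (seq_prod m lam x ps) (\<lambda>u. m u s)"
  using assms pprod_snoc[OF assms(1), of "map (\<lambda>(n, l). the (lam l (x n))) ps"]
  unfolding seq_prod_def by auto

lemma seq_prod_cong:
  assumes "\<And>q. q \<in> set ps \<Longrightarrow> x (fst q) = x' (fst q)"
  shows "seq_prod m lam x ps = seq_prod m lam x' ps"
proof -
  have map_eq: "map (\<lambda>(n, l). the (lam l (x n))) ps = map (\<lambda>(n, l). the (lam l (x' n))) ps"
    using assms by (auto intro!: map_cong)
  moreover have defined_eq: "(\<forall>(n, l) \<in> set ps. lam l (x n) \<noteq> None) \<longleftrightarrow> (\<forall>(n, l) \<in> set ps. lam l (x' n) \<noteq> None)"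
    using assms by fastforce
  ultimately show ?thesis unfolding seq_prod_def by (simp only: map_eq defined_eq)
qed

definition index_lists_below :: "'i set \<Rightarrow> nat \<Rightarrow> (nat \<times> 'i) list set" where
  "index_lists_below \<Lambda> n = {ps. index_list \<Lambda> ps \<and> (\<forall>q\<in>set ps. fst q < n)}"

lemma index_lists_below_0: "index_lists_below \<Lambda> 0 = {}"
  unfolding index_lists_below_def index_list_def by (auto, metis last_in_set prod.collapse)

lemma index_list_in_below:
  "index_list \<Lambda> ps \<Longrightarrow> ps \<in> index_lists_below \<Lambda> (Suc (Max (fst ` set ps)))"
  unfolding index_lists_below_def by (simp add: le_imp_less_Suc)

lemma finite_index_lists_below:
  assumes "finite \<Lambda>"
  shows "finite (index_lists_below \<Lambda> n)"
proof (rule finite_subset)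
  let ?A = "{..<n} \<times> \<Lambda>"
  show "index_lists_below \<Lambda> n \<subseteq> {xs. set xs \<subseteq> ?A \<and> length xs \<le> card ?A}"
  proof
    fix ps assume "ps \<in> index_lists_below \<Lambda> n"
    then have ps: "index_list \<Lambda> ps" "\<forall>q\<in>set ps. fst q < n"
      unfolding index_lists_below_def by auto
    then have sorted: "sorted_wrt (\<lambda>a b. fst a < fst b) ps" and sub: "set ps \<subseteq> ?A"
      unfolding index_list_def by (auto simp: mem_Times_iff)
    have "distinct ps" using sorted by (induction ps) fastforce+
    then have "length ps = card (set ps)" by (simp add: distinct_card)
    also have "\<dots> \<le> card ?A" using sub assms by (intro card_mono) auto
    finally show "ps \<in> {xs. set xs \<subseteq> ?A \<and> length xs \<le> card ?A}" using sub by simp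
  qed
  show "finite {xs. set xs \<subseteq> ?A \<and> length xs \<le> card ?A}"
    using assms by (simp add: finite_lists_length_le)
qed

lemma index_lists_below_SucE:
  assumes "ps \<in> index_lists_below \<Lambda> (Suc n)"
  obtains "ps \<in> index_lists_below \<Lambda> n"
  | l where "l \<in> \<Lambda>" "ps = [(n, l)]"
  | ps0 l where "l \<in> \<Lambda>" "ps0 \<in> index_lists_below \<Lambda> n" "ps = ps0 @ [(n, l)]"
proof (cases "\<forall>q\<in>set ps. fst q < n")
  case True
  then show ?thesis using assms that(1) unfolding index_lists_below_def by simp
next
  case False
  have ps: "index_list \<Lambda> ps" "\<forall>q\<in>set ps. fst q < Suc n"
    using assms unfolding index_lists_below_def by auto
  obtain ps0 n' l where split: "ps = ps0 @ [(n', l)]"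
    using ps(1) unfolding index_list_def by (metis rev_exhaust surj_pair)
  have sorted0: "sorted_wrt (\<lambda>a b. fst a < fst b) ps0" and below: "\<forall>q\<in>set ps0. fst q < n'"
    using ps(1) unfolding index_list_def split by (auto simp: sorted_wrt_append)
  have "n' = n" using False ps(2) below unfolding split by fastforce
  have l: "l \<in> \<Lambda>" using ps(1) unfolding index_list_def split by auto
  show ?thesis
  proof (cases "ps0 = []")
    case True
    then show ?thesis using that(2) l split \<open>n' = n\<close> by simp
  next
    case False
    then have "ps0 \<in> index_lists_below \<Lambda> n"
      using sorted0 below ps(1) \<open>n' = n\<close> unfolding index_lists_below_def index_list_def split
      by auto
    then show ?thesis using that(3) l split \<open>n' = n\<close> by simp
  qed
qed

lemma prefix_dependent_choice:
  assumes local: "\<And>n x x'. (\<And>i. i < n \<Longrightarrow> x i = x' i) \<Longrightarrow> Q n x \<Longrightarrow> Q n x'"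
    and start: "Q 0 x0"
    and step: "\<And>n x. Q n x \<Longrightarrow> \<exists>y. Q (Suc n) (x(n := y))"
  shows "\<exists>x. \<forall>n. Q n x"
proof -
  obtain f where f: "\<And>n. Q n (f n)" "\<And>n. f (Suc n) = (f n)(n := f (Suc n) n)"
    using dependent_nat_choice[of Q "\<lambda>n x x'. x' = x(n := x' n)"] start step
    by (metis fun_upd_same)
  define z where "z i = f (Suc i) i" for i
  have agree: "i < n \<Longrightarrow> f n i = z i" for i n
  proof (induction n)
    case (Suc n)
    show ?case
    proof (cases "i = n")
      case False
      then have "f (Suc n) i = f n i" using f(2)[of n] by (metis fun_upd_other)
      then show ?thesis using Suc False by simp
    qed (simp add: z_def)
  qed simp
  show ?thesis using local[OF agree f(1)] by blast
qed

locale monochromatic_basic_sequence =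
  fixes \<Lambda> :: "'i set"
    and j :: "'a \<Rightarrow> 'a \<Rightarrow> 'a"
    and lamA :: "'i \<Rightarrow> 'a"
    and m :: "'s \<Rightarrow> 's \<Rightarrow> 's option"
    and lam :: "'i \<Rightarrow> 'x \<Rightarrow> 's option"
    and p :: "'x set set"
    and g :: "'a \<Rightarrow> 's set set"
    and F :: "'a set"
    and C :: "'a \<Rightarrow> 's set"
  assumes finite_Lambda: "finite \<Lambda>"
    and A_assoc: "\<And>a b d. j (j a b) d = j a (j b d)"
    and S_partial_semigroup: "partial_semigroup m"
    and p_ultrafilter: "ultrafilter_on p"
    and g_in_gammaS: "\<And>a. g a \<in> gammaS m"
    and g_mult: "\<And>a b. g (j a b) = gamma_mult m (g a) (g b)"
    and gamma_lam_p: "\<And>l. l \<in> \<Lambda> \<Longrightarrow> gamma_lam (lam l) p = g (lamA l)"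
    and finite_F: "finite F"
    and C_in_g: "\<And>a. C a \<in> g a"
begin

abbreviation "sp \<equiv> seq_prod m lam"
abbreviation "lab \<equiv> label_prod j lamA"
abbreviation "admissible \<equiv> F_admissible j lamA F \<Lambda>"

lemma g_ultrafilter: "ultrafilter_on (g a)"
  using g_in_gammaS unfolding gammaS_def by simp

lemma g_defined: "{t. m s t \<noteq> None} \<in> g a"
  using g_in_gammaS unfolding gammaS_def by simp

lemma g_multD: "B \<in> g (j a b) \<Longrightarrow> {s. {t. \<exists>v. m s t = Some v \<and> v \<in> B} \<in> g b} \<in> g a"
  using g_mult unfolding gamma_mult_def by auto

lemma lam_preimage_in: "l \<in> \<Lambda> \<Longrightarrow> B \<in> g (lamA l) \<Longrightarrow> {y. \<exists>s. lam l y = Some s \<and> s \<in> B} \<in> p"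
  using gamma_lam_p unfolding gamma_lam_def by auto

definition continuations :: "'s \<Rightarrow> 'a \<Rightarrow> 'a \<Rightarrow> 's set" where
  "continuations u a b = {t. \<exists>w. m u t = Some w \<and> w \<in> C (j a b)}"

lemma continuations_in: "{s. continuations s a b \<in> g b} \<in> g a"
  using g_multD[OF C_in_g] unfolding continuations_def .

lemma continuations_shift:
  assumes "m u s = Some w"
  shows "{t. \<exists>v. m s t = Some v \<and> v \<in> continuations u a (j L b)} \<subseteq> continuations w (j a L) b"
proof
  fix t assume "t \<in> {t. \<exists>v. m s t = Some v \<and> v \<in> continuations u a (j L b)}"
  then obtain v z where "m s t = Some v" "m u v = Some z" "z \<in> C (j a (j L b))"
    unfolding continuations_def by auto
  then show "t \<in> continuations w (j a L) b"
    using partial_semigroup_assoc[OF S_partial_semigroup assms] A_assoc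
    unfolding continuations_def by auto
qed

text \<open>\<open>extendable ps b\<close>: appending to \<open>ps\<close> an \<open>F\<close>-admissible tail of label \<open>b\<close> keeps all
  suffix labels in \<open>F\<close>.\<close>

definition extendable :: "(nat \<times> 'i) list \<Rightarrow> 'a \<Rightarrow> bool" where
  "extendable ps b \<longleftrightarrow> b \<in> F \<and> (\<forall>k<length ps. j (lab (drop k ps)) b \<in> F)"

lemma lab_drop_snoc: "k < length ps \<Longrightarrow> lab (drop k ps @ [(n, l)]) = j (lab (drop k ps)) (lamA l)"
  using label_prod_snoc[OF A_assoc, of "drop k ps"] by simp

lemma admissible_snoc_extendable:
  assumes "admissible (ps @ [(n, l)])"
  shows "extendable ps (lamA l)"
proof -
  have suffix: "k < Suc (length ps) \<Longrightarrow> lab (drop k (ps @ [(n, l)])) \<in> F" for k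
    using assms unfolding F_admissible_def by simp
  show ?thesis
    unfolding extendable_def
  proof (intro conjI allI impI)
    show "lamA l \<in> F" using suffix[of "length ps"] by (simp add: label_prod_single)
    fix k assume "k < length ps"
    then show "j (lab (drop k ps)) (lamA l) \<in> F" using suffix[of k] lab_drop_snoc by simp
  qed
qed

lemma extendable_snoc:
  assumes "extendable (ps @ [(n, l)]) b"
  shows "extendable ps (j (lamA l) b)"
proof -
  have suffix: "k < Suc (length ps) \<Longrightarrow> j (lab (drop k (ps @ [(n, l)]))) b \<in> F" for k
    using assms unfolding extendable_def by simp
  show ?thesis
    unfolding extendable_def
  proof (intro conjI allI impI)
    show "j (lamA l) b \<in> F" using suffix[of "length ps"] by (simp add: label_prod_single)
    fix k assume "k < length ps"
    then show "j (lab (drop k ps)) (j (lamA l) b) \<in> F"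
      using suffix[of k] lab_drop_snoc A_assoc by simp
  qed
qed

definition controlled :: "(nat \<times> 'i) list \<Rightarrow> 's \<Rightarrow> bool" where
  "controlled ps u \<longleftrightarrow> (admissible ps \<longrightarrow> u \<in> C (lab ps)) \<and>
     (\<forall>b. extendable ps b \<longrightarrow> continuations u (lab ps) b \<in> g b)"

definition controlled_starts :: "nat \<Rightarrow> 'i \<Rightarrow> 'x set" where
  "controlled_starts n l = {y. \<exists>s. lam l y = Some s \<and> controlled [(n, l)] s}"

lemma controlled_starts_in:
  assumes l: "l \<in> \<Lambda>"
  shows "controlled_starts n l \<in> p"
proof -
  let ?L = "lamA l"
  let ?B = "C ?L \<inter> (\<Inter>b\<in>F. {s. continuations s ?L b \<in> g b})"
  have "?B \<in> g ?L"
    using g_ultrafilter C_in_g continuations_in finite_F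
    by (intro ultrafilter_on_Int ultrafilter_on_INT)
  moreover have "?B \<subseteq> {s. controlled [(n, l)] s}"
    unfolding controlled_def extendable_def by (auto simp: label_prod_single)
  ultimately show ?thesis
    unfolding controlled_starts_def
    using p_ultrafilter lam_preimage_in[OF l] by (blast intro: ultrafilter_on_mono)
qed

definition controlled_extensions :: "'s \<Rightarrow> (nat \<times> 'i) list \<Rightarrow> nat \<Rightarrow> 'i \<Rightarrow> 'x set" where
  "controlled_extensions u ps n l =
    {y. \<exists>s w. lam l y = Some s \<and> m u s = Some w \<and> controlled (ps @ [(n, l)]) w}"

lemma controlled_snoc:
  assumes ne: "ps \<noteq> []" and w: "m u s = Some w"
    and last: "extendable ps (lamA l) \<Longrightarrow> s \<in> continuations u (lab ps) (lamA l)"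
    and tails: "\<And>b. b \<in> F \<Longrightarrow> extendable ps (j (lamA l) b) \<Longrightarrow>
      {t. \<exists>v. m s t = Some v \<and> v \<in> continuations u (lab ps) (j (lamA l) b)} \<in> g b"
  shows "controlled (ps @ [(n, l)]) w"
proof -
  have lab_snoc: "lab (ps @ [(n, l)]) = j (lab ps) (lamA l)" using label_prod_snoc[OF A_assoc ne] .
  have "w \<in> C (j (lab ps) (lamA l))" if "admissible (ps @ [(n, l)])"
    using last[OF admissible_snoc_extendable[OF that]] w unfolding continuations_def by auto
  moreover have "continuations w (j (lab ps) (lamA l)) b \<in> g b" if "extendable (ps @ [(n, l)]) b" for b
  proof -
    have "b \<in> F" "extendable ps (j (lamA l) b)"
      using that extendable_snoc unfolding extendable_def by blast+
    then show ?thesis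
      using tails continuations_shift[OF w] g_ultrafilter by (blast intro: ultrafilter_on_mono)
  qed
  ultimately show ?thesis unfolding controlled_def lab_snoc by blast
qed

lemma controlled_extensions_in:
  assumes l: "l \<in> \<Lambda>" and u: "controlled ps u" and ne: "ps \<noteq> []"
  shows "controlled_extensions u ps n l \<in> p"
proof -
  let ?L = "lamA l" and ?a = "lab ps"
  let ?tails = "{b\<in>F. extendable ps (j ?L b)}"
  define B where "B = {s. m u s \<noteq> None} \<inter> {s. extendable ps ?L \<longrightarrow> s \<in> continuations u ?a ?L} \<inter>
    (\<Inter>b\<in>?tails. {s. {t. \<exists>v. m s t = Some v \<and> v \<in> continuations u ?a (j ?L b)} \<in> g b})"
  have "{s. extendable ps ?L \<longrightarrow> s \<in> continuations u ?a ?L} \<in> g ?L"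
  proof (cases "extendable ps ?L")
    case True
    then show ?thesis using u unfolding controlled_def by simp
  next
    case False
    then show ?thesis using g_ultrafilter unfolding ultrafilter_on_def by simp
  qed
  moreover have "{s. {t. \<exists>v. m s t = Some v \<and> v \<in> continuations u ?a (j ?L b)} \<in> g b} \<in> g ?L"
    if "b \<in> ?tails" for b
    using that u g_multD unfolding controlled_def by simp
  ultimately have "B \<in> g ?L"
    unfolding B_def using g_ultrafilter g_defined finite_F
    by (intro ultrafilter_on_Int ultrafilter_on_INT) auto
  moreover have "\<exists>w. m u s = Some w \<and> controlled (ps @ [(n, l)]) w" if s: "s \<in> B" for s
  proof -
    obtain w where w: "m u s = Some w" using s unfolding B_def by auto
    then show ?thesis using s controlled_snoc[OF ne w] unfolding B_def by blast
  qed
  ultimately show ?thesis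
    unfolding controlled_extensions_def
    using lam_preimage_in[OF l] p_ultrafilter by (blast intro: ultrafilter_on_mono)
qed

lemma seq_prod_below_cong:
  "ps \<in> index_lists_below \<Lambda> n \<Longrightarrow> (\<And>i. i < n \<Longrightarrow> x i = x' i) \<Longrightarrow> sp x ps = sp x' ps"
  unfolding index_lists_below_def by (intro seq_prod_cong) auto

definition controlled_prefix :: "(nat \<Rightarrow> 'x) \<Rightarrow> nat \<Rightarrow> bool" where
  "controlled_prefix x n \<longleftrightarrow> (\<forall>ps\<in>index_lists_below \<Lambda> n. \<exists>u. sp x ps = Some u \<and> controlled ps u)"

lemma controlled_prefix_cong:
  "(\<And>i. i < n \<Longrightarrow> x i = x' i) \<Longrightarrow> controlled_prefix x n \<Longrightarrow> controlled_prefix x' n"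
  unfolding controlled_prefix_def using seq_prod_below_cong by metis

definition next_candidates :: "(nat \<Rightarrow> 'x) \<Rightarrow> nat \<Rightarrow> 'x set" where
  "next_candidates x n = (\<Inter>l\<in>\<Lambda>. controlled_starts n l) \<inter>
    (\<Inter>(ps, l)\<in>index_lists_below \<Lambda> n \<times> \<Lambda>. controlled_extensions (the (sp x ps)) ps n l)"

lemma controlled_prefixD:
  "controlled_prefix x n \<Longrightarrow> ps \<in> index_lists_below \<Lambda> n \<Longrightarrow> \<exists>u. sp x ps = Some u \<and> controlled ps u"
  unfolding controlled_prefix_def by simp

lemma next_candidates_in:
  assumes x: "controlled_prefix x n"
  shows "next_candidates x n \<in> p"
proof -
  have "(\<Inter>l\<in>\<Lambda>. controlled_starts n l) \<in> p"
    using finite_Lambda controlled_starts_in by (rule ultrafilter_on_INT[OF p_ultrafilter])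
  moreover have "controlled_extensions (the (sp x ps)) ps n l \<in> p"
    if ps: "ps \<in> index_lists_below \<Lambda> n" and l: "l \<in> \<Lambda>" for ps l
  proof -
    obtain u where "sp x ps = Some u" "controlled ps u" using controlled_prefixD[OF x ps] by blast
    moreover have "ps \<noteq> []" using ps unfolding index_lists_below_def index_list_def by simp
    ultimately show ?thesis using controlled_extensions_in[OF l] by simp
  qed
  then have "(\<Inter>(ps, l)\<in>index_lists_below \<Lambda> n \<times> \<Lambda>. controlled_extensions (the (sp x ps)) ps n l) \<in> p"
    using finite_Lambda finite_index_lists_below[OF finite_Lambda]
    by (intro ultrafilter_on_INT[OF p_ultrafilter]) auto
  ultimately show ?thesis
    unfolding next_candidates_def by (rule ultrafilter_on_Int[OF p_ultrafilter])
qed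

lemma controlled_prefix_update:
  assumes x: "controlled_prefix x n" and y: "y \<in> next_candidates x n"
  shows "controlled_prefix (x(n := y)) (Suc n)"
  unfolding controlled_prefix_def
proof
  fix ps assume "ps \<in> index_lists_below \<Lambda> (Suc n)"
  then show "\<exists>u. sp (x(n := y)) ps = Some u \<and> controlled ps u"
  proof (cases rule: index_lists_below_SucE)
    case 1
    then have "sp (x(n := y)) ps = sp x ps" by (intro seq_prod_below_cong) auto
    then show ?thesis using controlled_prefixD[OF x 1] by simp
  next
    case (2 l)
    then show ?thesis
      using y unfolding next_candidates_def controlled_starts_def by (auto simp: seq_prod_single)
  next
    case (3 ps0 l)
    obtain u where u: "sp x ps0 = Some u" using controlled_prefixD[OF x 3(2)] by blast
    obtain s w where s: "lam l y = Some s" "m u s = Some w" "controlled ps w"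
      using y 3 u unfolding next_candidates_def controlled_extensions_def by fastforce
    have "sp (x(n := y)) ps0 = Some u"
      using seq_prod_below_cong[OF 3(2), of "x(n := y)" x] u by simp
    moreover have "ps0 \<noteq> []" using 3(2) unfolding index_lists_below_def index_list_def by simp
    ultimately have "sp (x(n := y)) ps = Some w"
      using seq_prod_snoc[OF S_partial_semigroup, of ps0 lam l "x(n := y)" n s] 3(3) s by simp
    then show ?thesis using s(3) by blast
  qed
qed

lemma controlled_sequence_exists:
  assumes D: "D \<in> p"
  shows "\<exists>x. \<forall>n. controlled_prefix x n \<and> (\<forall>i<n. x i \<in> D)"
proof (rule prefix_dependent_choice)
  show "controlled_prefix x0 0 \<and> (\<forall>i<0. x0 i \<in> D)" for x0
    unfolding controlled_prefix_def by (simp add: index_lists_below_0)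
  show "controlled_prefix x' n \<and> (\<forall>i<n. x' i \<in> D)"
    if "\<And>i. i < n \<Longrightarrow> x i = x' i" "controlled_prefix x n \<and> (\<forall>i<n. x i \<in> D)" for n x x'
    using that controlled_prefix_cong by metis
  show "\<exists>y. controlled_prefix (x(n := y)) (Suc n) \<and> (\<forall>i<Suc n. (x(n := y)) i \<in> D)"
    if "controlled_prefix x n \<and> (\<forall>i<n. x i \<in> D)" for n x
  proof -
    have "D \<inter> next_candidates x n \<in> p"
      using that D next_candidates_in ultrafilter_on_Int[OF p_ultrafilter] by blast
    then obtain y where "y \<in> D" "y \<in> next_candidates x n"
      using ultrafilter_on_nonempty[OF p_ultrafilter] by blast
    then show ?thesis using that controlled_prefix_update less_Suc_eq by auto
  qed
qed

theorem basic_sequence_with_monochromatic_products: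
  assumes "D \<in> p"
  shows "\<exists>x. (\<forall>n. x n \<in> D) \<and> basic_seq m \<Lambda> lam x \<and>
    (\<forall>ps u. admissible ps \<longrightarrow> sp x ps = Some u \<longrightarrow> u \<in> C (lab ps))"
proof -
  obtain x where x: "\<And>n. controlled_prefix x n" "\<And>i n. i < n \<Longrightarrow> x i \<in> D"
    using controlled_sequence_exists[OF assms] by blast
  have "\<exists>u. sp x ps = Some u \<and> controlled ps u" if "index_list \<Lambda> ps" for ps
    using controlled_prefixD[OF x(1) index_list_in_below[OF that]] .
  then have "basic_seq m \<Lambda> lam x" "admissible ps \<Longrightarrow> sp x ps = Some u \<Longrightarrow> u \<in> C (lab ps)" for ps u
    unfolding basic_seq_def controlled_def F_admissible_def by fastforce+
  then show ?thesis using x(2) lessI by blast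
qed

end

theorem corollary3p4:
  fixes \<Lambda> :: "'i set"
    and j :: "'a \<Rightarrow> 'a \<Rightarrow> 'a"
    and lamA :: "'i \<Rightarrow> 'a"
    and m :: "'s \<Rightarrow> 's \<Rightarrow> 's option"
    and lam :: "'i \<Rightarrow> 'x \<Rightarrow> 's option"
    and p :: "'x set set"
    and g :: "'a \<Rightarrow> 's set set"
    and F :: "'a set"
    and D :: "'x set"
    and c :: "'s \<Rightarrow> 'c"
  assumes fin_Lambda: "finite \<Lambda>"
    and A_semigroup: "\<forall>a b d. j (j a b) d = j a (j b d)"
    and A_array: "\<Lambda> \<noteq> {}"
    and S_psg: "partial_semigroup m"
    and S_array: "function_array m \<Lambda> lam"
    and f_in: "p \<in> gammaX m \<Lambda> lam"
    and g_in: "\<forall>a. g a \<in> gammaS m"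
    and g_hom: "\<forall>a b. g (j a b) = gamma_mult m (g a) (g b)"
    and fg_hom: "\<forall>l\<in>\<Lambda>. gamma_lam (lam l) p = g (lamA l)"
    and fin_F: "finite F"
    and D_in: "D \<in> p"
    and fin_colors: "finite (range c)"
  shows "\<exists>x. (\<forall>n. x n \<in> D) \<and> basic_seq m \<Lambda> lam x \<and> tame m \<Lambda> lam j lamA F c x"
proof -
  have "\<forall>a. \<exists>k. c -` {k} \<in> g a"
    using g_in fin_colors ultrafilter_on_fiber unfolding gammaS_def by blast
  then obtain col where col: "\<And>a. c -` {col a} \<in> g a" by metis
  interpret monochromatic_basic_sequence \<Lambda> j lamA m lam p g F "\<lambda>a. c -` {col a}"
    using fin_Lambda A_semigroup S_psg f_in g_in g_hom fg_hom fin_F col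
    by unfold_locales (auto simp: gammaX_def)
  obtain x where x: "\<forall>n. x n \<in> D" "basic_seq m \<Lambda> lam x"
    and monochromatic: "\<And>ps u. admissible ps \<Longrightarrow> sp x ps = Some u \<Longrightarrow> c u = col (lab ps)"
    using basic_sequence_with_monochromatic_products[OF D_in] by auto
  have "tame m \<Lambda> lam j lamA F c x"
    unfolding tame_def using monochromatic by metis
  then show ?thesis using x by blast
qed

end
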